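(* Let $p$ be a prime. The only $p$-archimedean divisibility $|$ on the field $\mathbb{Q}$ with $p\nmid1$ is the one given by the $p$-adic valuation: $a|b\Leftrightarrow v_p(a)\le v_p(b)$.
   Context: A divisibility on a commutative ring $A$ with $1\neq0$ is a binary relation $|\subseteq A\times A$ such that for all $a,b,c$: (1) $a|a$; (2) $a|b,\ b|c\Rightarrow a|c$; (3) $a|b,\ a|c\Rightarrow a|b-c$; (4) $a|b\Rightarrow ac|bc$; (5) $0\nmid1$. A divisibility on $\mathbb{Q}$ is $p$-archimedean if for every $a\in\mathbb{Q}$ there is $m\in\mathbb{Z}$ with $p^m|a$. *)

theory Defs
  imports Complex_Main "HOL-Computational_Algebra.Primes"
begin

definition divisibility :: "('a::comm_ring_1 \<Rightarrow> 'a \<Rightarrow> bool) \<Rightarrow> bool" where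
  "divisibility D \<longleftrightarrow>
     (\<forall>a. D a a) \<and>
     (\<forall>a b c. D a b \<longrightarrow> D b c \<longrightarrow> D a c) \<and>
     (\<forall>a b c. D a b \<longrightarrow> D a c \<longrightarrow> D a (b - c)) \<and>
     (\<forall>a b c. D a b \<longrightarrow> D (a * c) (b * c)) \<and>
     \<not> D 0 1"

definition p_archimedean :: "nat \<Rightarrow> (rat \<Rightarrow> rat \<Rightarrow> bool) \<Rightarrow> bool" where
  "p_archimedean p D \<longleftrightarrow> (\<forall>a::rat. \<exists>m::int. D ((of_nat p) powi m) a)"

definition padic_val :: "nat \<Rightarrow> rat \<Rightarrow> int" where
  "padic_val p r = (case quotient_of r of (a, b) \<Rightarrow>
      int (multiplicity (int p) a) - int (multiplicity (int p) b))"

text \<open>a | b iff v_p(a) \<le> v_p(b), with the convention v_p(0) = \<infinity>.\<close>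
definition padic_dvd :: "nat \<Rightarrow> rat \<Rightarrow> rat \<Rightarrow> bool" where
  "padic_dvd p a b \<longleftrightarrow> b = 0 \<or> (a \<noteq> 0 \<and> padic_val p a \<le> padic_val p b)"

end

theory Submission
  imports Defs
begin

text \<open>On a field, a divisibility is determined by the subring \<open>S = {x. 1 | x}\<close> via
  \<open>a | b \<longleftrightarrow> b = 0 \<or> (a \<noteq> 0 \<and> b / a \<in> S)\<close>, and every subring arises this way; the
  \<open>p\<close>-adic divisibility corresponds to the local ring \<open>\<int>\<^bsub>(p)\<^esub>\<close>. If \<open>1/p \<notin> S\<close>, then no element
  \<open>a/b\<close> of \<open>S\<close> in lowest terms has \<open>p | b\<close>: multiplying by \<open>b/p\<close> would put \<open>a/p\<close> in \<open>S\<close>,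
  and Bezout for the coprime pair \<open>a, p\<close> would then put \<open>1/p\<close> in \<open>S\<close>. Hence \<open>S \<subseteq> \<int>\<^bsub>(p)\<^esub>\<close>.
  Conversely, \<open>p\<close>-archimedeanity gives \<open>p\<^sup>k/d \<in> S\<close> for some \<open>k\<close> whenever \<open>p\<close> does not divide \<open>d\<close>, and
  Bezout for \<open>p\<^sup>k, d\<close> gives \<open>1/d \<in> S\<close>, so \<open>\<int>\<^bsub>(p)\<^esub> \<subseteq> S\<close>.\<close>

context
  fixes D :: "'a::comm_ring_1 \<Rightarrow> 'a \<Rightarrow> bool"
  assumes D: "divisibility D"
begin

lemma divisibility_refl: "D a a"
  using D unfolding divisibility_def by blast

lemma divisibility_trans: "D a b \<Longrightarrow> D b c \<Longrightarrow> D a c"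
  using D unfolding divisibility_def by blast

lemma divisibility_diff: "D a b \<Longrightarrow> D a c \<Longrightarrow> D a (b - c)"
  using D unfolding divisibility_def by blast

lemma divisibility_mult_right: "D a b \<Longrightarrow> D (a * c) (b * c)"
  using D unfolding divisibility_def by blast

lemma divisibility_not_0_1: "\<not> D 0 1"
  using D unfolding divisibility_def by blast

lemma divisibility_dvd_0: "D a 0"
  using divisibility_diff[OF divisibility_refl divisibility_refl] by simp

lemma divisibility_minus: "D a b \<Longrightarrow> D a (- b)"
  using divisibility_diff[OF divisibility_dvd_0] by fastforce

lemma divisibility_add: "D a b \<Longrightarrow> D a c \<Longrightarrow> D a (b + c)"
  using divisibility_diff[of a b "- c"] divisibility_minus[of a c] by simp

lemma divisibility_one_mult: "D 1 x \<Longrightarrow> D 1 y \<Longrightarrow> D 1 (x * y)"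
  using divisibility_trans[of 1 y "x * y"] divisibility_mult_right[of 1 x y] by simp

lemma divisibility_one_of_int: "D 1 (of_int n)"
proof -
  have nat: "D 1 (of_nat k)" for k
    by (induction k) (simp_all add: divisibility_dvd_0 divisibility_add divisibility_refl)
  show ?thesis
    using nat[of "nat n"] divisibility_minus[OF nat[of "nat (- n)"]]
    by (cases "n \<ge> 0") simp_all
qed

end

context
  fixes D :: "'a::field \<Rightarrow> 'a \<Rightarrow> bool"
  assumes D: "divisibility D"
begin

lemma divisibility_0_dvd: "D 0 b \<Longrightarrow> b = 0"
  using divisibility_mult_right[OF D, of 0 b "1 / b"] divisibility_not_0_1[OF D]
  by (cases "b = 0") simp_all

lemma divisibility_iff_one_dvd_div:
  assumes "a \<noteq> 0"
  shows "D a b \<longleftrightarrow> D 1 (b / a)"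
  using divisibility_mult_right[OF D, of a b "1 / a"] divisibility_mult_right[OF D, of 1 "b / a" a] assms
  by (intro iffI) simp_all

lemma divisibility_one_inverse_denom:
  assumes "coprime a b" and "D 1 (of_int a / of_int b)"
  shows "D 1 (1 / of_int b)"
proof (cases "of_int b = (0::'a)")
  case True
  then show ?thesis using divisibility_dvd_0[OF D] by simp
next
  case False
  obtain u w where "u * a + w * b = 1"
    using bezout_int[of a b] assms(1) by (auto simp: coprime_iff_gcd_eq_1)
  then have "(of_int u * of_int a + of_int w * of_int b :: 'a) = 1"
    by (metis of_int_1 of_int_add of_int_mult)
  with False have inverse_denom: "(1::'a) / of_int b = of_int u * (of_int a / of_int b) + of_int w"
    by (simp add: field_simps)
  have "D 1 (of_int u * (of_int a / of_int b))"
    using divisibility_one_mult[OF D divisibility_one_of_int[OF D] assms(2)] .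
  then show ?thesis
    unfolding inverse_denom by (rule divisibility_add[OF D _ divisibility_one_of_int[OF D]])
qed

end

definition subring_divisibility :: "('a::field \<Rightarrow> bool) \<Rightarrow> 'a \<Rightarrow> 'a \<Rightarrow> bool" where
  "subring_divisibility S a b \<longleftrightarrow> b = 0 \<or> (a \<noteq> 0 \<and> S (b / a))"

lemma divisibility_eq_subring_divisibility:
  fixes D :: "'a::field \<Rightarrow> 'a \<Rightarrow> bool"
  assumes "divisibility D"
  shows "D = subring_divisibility (D 1)"
proof (intro ext)
  fix a b
  show "D a b = subring_divisibility (D 1) a b"
  proof (cases "a = 0")
    case True
    then show ?thesis
      using divisibility_dvd_0[OF assms] divisibility_0_dvd[OF assms]
      unfolding subring_divisibility_def by blast
  next
    case False
    then show ?thesis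
      using divisibility_dvd_0[OF assms] divisibility_iff_one_dvd_div[OF assms False]
      unfolding subring_divisibility_def by blast
  qed
qed

lemma divisibility_subring_divisibility:
  fixes S :: "'a::field \<Rightarrow> bool"
  assumes one: "S 1"
    and diff: "\<And>x y. S x \<Longrightarrow> S y \<Longrightarrow> S (x - y)"
    and mult: "\<And>x y. S x \<Longrightarrow> S y \<Longrightarrow> S (x * y)"
  shows "divisibility (subring_divisibility S)"
  unfolding divisibility_def subring_divisibility_def
proof (intro conjI allI impI)
  fix a b c :: 'a
  assume ab: "b = 0 \<or> a \<noteq> 0 \<and> S (b / a)"
  {
    assume bc: "c = 0 \<or> b \<noteq> 0 \<and> S (c / b)"
    show "c = 0 \<or> a \<noteq> 0 \<and> S (c / a)"
    proof (cases "c = 0")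
      case False
      with ab bc have "a \<noteq> 0" "b \<noteq> 0" "S (c / b)" "S (b / a)" by auto
      then show ?thesis using mult[of "c / b" "b / a"] by simp
    qed simp
  next
    assume ac: "c = 0 \<or> a \<noteq> 0 \<and> S (c / a)"
    have zero: "S 0" using diff[OF one one] by simp
    show "b - c = 0 \<or> a \<noteq> 0 \<and> S ((b - c) / a)"
    proof (cases "b - c = 0")
      case False
      with ab ac have "a \<noteq> 0" "S (b / a)" "S (c / a)" using zero by auto
      then show ?thesis using diff[of "b / a" "c / a"] by (simp add: diff_divide_distrib)
    qed simp
  next
    show "b * c = 0 \<or> a * c \<noteq> 0 \<and> S (b * c / (a * c))"
      using ab by (cases "c = 0") auto
  }
qed (use one in simp_all)

definition p_integral :: "nat \<Rightarrow> rat \<Rightarrow> bool" where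
  "p_integral p x \<longleftrightarrow> (\<exists>n d. \<not> int p dvd d \<and> x = of_int n / of_int d)"

lemma padic_val_of_int_div:
  assumes "prime p" and "n \<noteq> 0" and "d \<noteq> 0"
  shows "padic_val p (of_int n / of_int d) =
    int (multiplicity (int p) n) - int (multiplicity (int p) d)"
proof -
  have p: "prime_elem (int p)" using assms(1) by (simp add: prime_imp_prime_elem)
  obtain a b where q: "quotient_of (of_int n / of_int d) = (a, b)" by fastforce
  have "(of_int n / of_int d :: rat) = of_int a / of_int b" and "b > 0"
    using quotient_of_div[OF q] quotient_of_denom_pos[OF q] by simp_all
  then have "(of_int (n * b) :: rat) = of_int (a * d)"
    using assms(3) by (simp add: field_simps)
  then have nb: "n * b = a * d" by (simp only: of_int_eq_iff)
  with assms(2,3) \<open>b > 0\<close> have "a \<noteq> 0" by auto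
  have "multiplicity (int p) n + multiplicity (int p) b =
      multiplicity (int p) a + multiplicity (int p) d"
    using arg_cong[OF nb, of "multiplicity (int p)"] prime_elem_multiplicity_mult_distrib[OF p]
      assms(2,3) \<open>a \<noteq> 0\<close> \<open>b > 0\<close> by simp
  then show ?thesis unfolding padic_val_def q by simp
qed

lemma padic_val_div:
  assumes "prime p" and "a \<noteq> 0" and "b \<noteq> 0"
  shows "padic_val p (b / a) = padic_val p b - padic_val p a"
proof -
  have p: "prime_elem (int p)" using assms(1) by (simp add: prime_imp_prime_elem)
  obtain na da where qa: "quotient_of a = (na, da)" by fastforce
  obtain nb db where qb: "quotient_of b = (nb, db)" by fastforce
  have a: "a = of_int na / of_int da" and "da > 0"
    using quotient_of_div[OF qa] quotient_of_denom_pos[OF qa] by simp_all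
  have b: "b = of_int nb / of_int db" and "db > 0"
    using quotient_of_div[OF qb] quotient_of_denom_pos[OF qb] by simp_all
  have "na \<noteq> 0" "nb \<noteq> 0" using a b assms(2,3) by auto
  have "b / a = of_int (nb * da) / of_int (db * na)"
    unfolding a b using \<open>da > 0\<close> \<open>db > 0\<close> \<open>na \<noteq> 0\<close> by (simp add: field_simps)
  then have "padic_val p (b / a) =
      int (multiplicity (int p) (nb * da)) - int (multiplicity (int p) (db * na))"
    using padic_val_of_int_div[OF assms(1), of "nb * da" "db * na"]
      \<open>na \<noteq> 0\<close> \<open>nb \<noteq> 0\<close> \<open>da > 0\<close> \<open>db > 0\<close> by simp
  also have "\<dots> = (int (multiplicity (int p) nb) - int (multiplicity (int p) db))
      - (int (multiplicity (int p) na) - int (multiplicity (int p) da))"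
    using prime_elem_multiplicity_mult_distrib[OF p]
      \<open>na \<noteq> 0\<close> \<open>nb \<noteq> 0\<close> \<open>da > 0\<close> \<open>db > 0\<close> by simp
  also have "\<dots> = padic_val p b - padic_val p a"
    using padic_val_of_int_div[OF assms(1)] \<open>na \<noteq> 0\<close> \<open>nb \<noteq> 0\<close> \<open>da > 0\<close> \<open>db > 0\<close>
    unfolding a b by simp
  finally show ?thesis .
qed

lemma p_integral_iff_padic_val_nonneg:
  assumes "prime p"
  shows "p_integral p x \<longleftrightarrow> padic_val p x \<ge> 0"
proof
  assume "p_integral p x"
  then obtain n d where "\<not> int p dvd d" and x: "x = of_int n / of_int d"
    unfolding p_integral_def by blast
  then have "d \<noteq> 0" and "multiplicity (int p) d = 0"
    by (auto intro: not_dvd_imp_multiplicity_0)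
  then show "padic_val p x \<ge> 0"
    using padic_val_of_int_div[OF assms, of n d] unfolding x
    by (cases "n = 0") (simp_all add: padic_val_def)
next
  assume nonneg: "padic_val p x \<ge> 0"
  obtain a b where q: "quotient_of x = (a, b)" by fastforce
  have x: "x = of_int a / of_int b" and "coprime a b" and "b > 0"
    using quotient_of_div[OF q] quotient_of_coprime[OF q] quotient_of_denom_pos[OF q] by simp_all
  have "\<not> int p dvd b"
  proof
    assume "int p dvd b"
    moreover have "\<not> is_unit (int p)" using prime_gt_1_nat[OF assms] by simp
    ultimately have "\<not> int p dvd a"
      using coprime_common_divisor[OF \<open>coprime a b\<close>] by blast
    then have "multiplicity (int p) a = 0" by (rule not_dvd_imp_multiplicity_0)
    moreover have "multiplicity (int p) b \<ge> 1"
      using \<open>int p dvd b\<close> \<open>b > 0\<close> assms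
      by (intro multiplicity_geI) (auto simp: prime_imp_prime_elem prime_elem_not_unit)
    ultimately show False using nonneg unfolding padic_val_def q by simp
  qed
  with x show "p_integral p x" unfolding p_integral_def by blast
qed

lemma padic_dvd_eq_subring_divisibility:
  assumes "prime p"
  shows "padic_dvd p = subring_divisibility (p_integral p)"
  using padic_val_div[OF assms] p_integral_iff_padic_val_nonneg[OF assms]
  unfolding padic_dvd_def subring_divisibility_def by fastforce

lemma p_integral_of_int:
  assumes "prime p"
  shows "p_integral p (of_int n)"
  unfolding p_integral_def using prime_gt_1_nat[OF assms]
  by (intro exI[of _ n] exI[of _ 1]) simp

lemma p_integral_diff:
  assumes "prime p" and "p_integral p x" and "p_integral p y"
  shows "p_integral p (x - y)"
proof -
  obtain n d where d: "\<not> int p dvd d" and x: "x = of_int n / of_int d"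
    using assms(2) unfolding p_integral_def by blast
  obtain m e where e: "\<not> int p dvd e" and y: "y = of_int m / of_int e"
    using assms(3) unfolding p_integral_def by blast
  have "d \<noteq> 0" "e \<noteq> 0" using d e by auto
  then have "x - y = of_int (n * e - m * d) / of_int (d * e)"
    unfolding x y by (simp add: field_simps)
  moreover have "\<not> int p dvd d * e" using d e assms(1) by (simp add: prime_dvd_mult_iff)
  ultimately show ?thesis unfolding p_integral_def by blast
qed

lemma p_integral_mult:
  assumes "prime p" and "p_integral p x" and "p_integral p y"
  shows "p_integral p (x * y)"
proof -
  obtain n d where d: "\<not> int p dvd d" and x: "x = of_int n / of_int d"
    using assms(2) unfolding p_integral_def by blast
  obtain m e where e: "\<not> int p dvd e" and y: "y = of_int m / of_int e"
    using assms(3) unfolding p_integral_def by blast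
  have "x * y = of_int (n * m) / of_int (d * e)" unfolding x y by simp
  moreover have "\<not> int p dvd d * e" using d e assms(1) by (simp add: prime_dvd_mult_iff)
  ultimately show ?thesis unfolding p_integral_def by blast
qed

lemma not_p_integral_inverse:
  assumes "prime p"
  shows "\<not> p_integral p (1 / of_nat p)"
proof -
  have "p \<noteq> 0" using assms by auto
  then have "padic_val p (of_int 1 / of_int (int p)) = - 1"
    using padic_val_of_int_div[OF assms, of 1 "int p"] assms
    by (simp add: prime_imp_prime_elem)
  then show ?thesis using p_integral_iff_padic_val_nonneg[OF assms] by simp
qed

lemma divisibility_padic_dvd:
  assumes "prime p"
  shows "divisibility (padic_dvd p)"
  unfolding padic_dvd_eq_subring_divisibility[OF assms]
  using p_integral_of_int[OF assms, of 1] p_integral_diff[OF assms] p_integral_mult[OF assms]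
  by (intro divisibility_subring_divisibility) simp_all

lemma not_padic_dvd_p_1:
  assumes "prime p"
  shows "\<not> padic_dvd p (of_nat p) 1"
  using not_p_integral_inverse[OF assms] unfolding padic_dvd_eq_subring_divisibility[OF assms]
  by (simp add: subring_divisibility_def)

lemma p_archimedean_padic_dvd:
  assumes "prime p"
  shows "p_archimedean p (padic_dvd p)"
  unfolding p_archimedean_def padic_dvd_eq_subring_divisibility[OF assms]
proof
  fix a :: rat
  obtain n d where q: "quotient_of a = (n, d)" by fastforce
  have a: "a = of_int n / of_int d" and "d > 0"
    using quotient_of_div[OF q] quotient_of_denom_pos[OF q] by simp_all
  have "d \<noteq> 0" and "\<not> is_unit (int p)"
    using \<open>d > 0\<close> prime_gt_1_nat[OF assms] by simp_all
  then obtain d' where d: "d = int p ^ multiplicity (int p) d * d'" and "\<not> int p dvd d'"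
    using multiplicity_decompose'[of d "int p"] by blast
  define k where "k = multiplicity (int p) d"
  have "p \<noteq> 0" using assms by auto
  have "of_int d = (of_nat p :: rat) ^ k * of_int d'"
    using d unfolding k_def by (metis of_int_mult of_int_of_nat_eq of_int_power)
  with \<open>p \<noteq> 0\<close> have "a / of_nat p powi (- int k) = of_int n / of_int d'"
    unfolding a by (simp add: power_int_minus)
  with \<open>\<not> int p dvd d'\<close> have "p_integral p (a / of_nat p powi (- int k))"
    unfolding p_integral_def by blast
  with \<open>p \<noteq> 0\<close> show "\<exists>m. subring_divisibility (p_integral p) (of_nat p powi m) a"
    unfolding subring_divisibility_def by (intro exI[of _ "- int k"]) simp
qed

lemma divisibility_one_dvd_imp_p_integral:
  fixes D :: "rat \<Rightarrow> rat \<Rightarrow> bool"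
  assumes D: "divisibility D" and "\<not> D 1 (1 / of_nat p)" and "D 1 x"
  shows "p_integral p x"
proof (rule ccontr)
  assume not_integral: "\<not> p_integral p x"
  obtain a b where q: "quotient_of x = (a, b)" by fastforce
  have x: "x = of_int a / of_int b" and "coprime a b" and "b > 0"
    using quotient_of_div[OF q] quotient_of_coprime[OF q] quotient_of_denom_pos[OF q] by simp_all
  moreover have "int p dvd b" using not_integral x unfolding p_integral_def by blast
  then obtain c where c: "b = int p * c" by (auto simp: dvd_def)
  ultimately have "coprime a (int p)" "c \<noteq> 0" by auto
  have "x * of_int c = of_int a / of_int (int p)"
    using \<open>c \<noteq> 0\<close> \<open>b > 0\<close> unfolding x c by (simp add: field_simps)
  then have "D 1 (of_int a / of_int (int p))"
    using divisibility_one_mult[OF D \<open>D 1 x\<close> divisibility_one_of_int[OF D, of c]] by simp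
  then have "D 1 (1 / of_int (int p))"
    using divisibility_one_inverse_denom[OF D \<open>coprime a (int p)\<close>] by blast
  with assms(2) show False by simp
qed

lemma p_integral_imp_divisibility_one_dvd:
  fixes D :: "rat \<Rightarrow> rat \<Rightarrow> bool"
  assumes "prime p" and D: "divisibility D" and "p_archimedean p D" and "p_integral p x"
  shows "D 1 x"
proof -
  obtain n d where "\<not> int p dvd d" and x: "x = of_int n / of_int d"
    using assms(4) unfolding p_integral_def by blast
  then have coprime_d: "coprime (int p) d"
    using assms(1) by (simp add: prime_imp_coprime)
  obtain m where m: "D (of_nat p powi m) (1 / of_int d)"
    using assms(3) unfolding p_archimedean_def by blast
  have "D 1 (1 / of_int d)"
  proof (cases m rule: int_cases2)
    case (nonneg k)
    then have "D (of_int (int p ^ k)) (1 / of_int d)" using m by simp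
    then show ?thesis
      by (rule divisibility_trans[OF D divisibility_one_of_int[OF D]])
  next
    case (nonpos k)
    have pk: "of_int (int p ^ k) \<noteq> (0::rat)" using assms(1) by simp
    have "(of_nat p :: rat) powi m = 1 / of_int (int p ^ k)"
      using nonpos by (simp add: power_int_minus divide_inverse)
    with m have "D (1 / of_int (int p ^ k)) (1 / of_int d)" by simp
    then have "D 1 ((1 / of_int d) / (1 / of_int (int p ^ k)))"
      using divisibility_iff_one_dvd_div[OF D, of "1 / of_int (int p ^ k)"] pk by simp
    then have "D 1 (of_int (int p ^ k) / of_int d)" by simp
    with coprime_d show ?thesis
      using divisibility_one_inverse_denom[OF D, of "int p ^ k" d] by simp
  qed
  then have "D 1 (of_int n * (1 / of_int d))"
    by (rule divisibility_one_mult[OF D divisibility_one_of_int[OF D]])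
  then show ?thesis using x by simp
qed

theorem proposition4p3:
  fixes p :: nat and D :: "rat \<Rightarrow> rat \<Rightarrow> bool"
  assumes "prime p"
  shows "(divisibility D \<and> p_archimedean p D \<and> \<not> D (of_nat p) 1) \<longleftrightarrow> D = padic_dvd p"
proof
  assume "divisibility D \<and> p_archimedean p D \<and> \<not> D (of_nat p) 1"
  then have D: "divisibility D" and "p_archimedean p D" and "\<not> D (of_nat p) 1" by simp_all
  have "p \<noteq> 0" using assms by auto
  with \<open>\<not> D (of_nat p) 1\<close> have "\<not> D 1 (1 / of_nat p)"
    using divisibility_iff_one_dvd_div[OF D, of "of_nat p" 1] by simp
  have "D 1 x \<longleftrightarrow> p_integral p x" for x
    using divisibility_one_dvd_imp_p_integral[OF D \<open>\<not> D 1 (1 / of_nat p)\<close>]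
      p_integral_imp_divisibility_one_dvd[OF assms D \<open>p_archimedean p D\<close>] by blast
  then have "D 1 = p_integral p" by (rule ext)
  have "D = subring_divisibility (D 1)"
    by (rule divisibility_eq_subring_divisibility[OF D])
  also have "\<dots> = padic_dvd p"
    unfolding \<open>D 1 = p_integral p\<close> padic_dvd_eq_subring_divisibility[OF assms] ..
  finally show "D = padic_dvd p" .
next
  assume "D = padic_dvd p"
  then show "divisibility D \<and> p_archimedean p D \<and> \<not> D (of_nat p) 1"
    using divisibility_padic_dvd p_archimedean_padic_dvd not_padic_dvd_p_1 assms by simp
qed

end
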